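(* Let $m\ge 1$, let $f_1,\ldots,f_{m+1}$ be arithmetic functions, and let $\gamma_0,\gamma_1,\ldots,\gamma_m\in\mathbb{N}$ satisfy $\gamma_0=1$ and $\gamma_0\mid\gamma_1\mid\gamma_2\mid\cdots\mid\gamma_m$. Then for all $s\in\mathbb{C}$ with $\Re(s)>\max\{\sigma(f_1),\ldots,\sigma(f_{m+1})\}$, \[ L\bigl(s;f_{m+1}*_{\gamma_m}\cdots*_{\gamma_1}f_1\bigr)=\prod_{j=1}^{m+1}L\bigl(s;f_j^{[\gamma_{j-1}]}\bigr). \]
   Context: $\mathbb{N}=\{1,2,3,\ldots\}$. An arithmetic function is a map $f:\mathbb{N}\to\mathbb{C}$; by convention $f(x)=0$ whenever $x\notin\mathbb{N}$ (e.g. for non-integral rationals $x$). For $\gamma\in\mathbb{N}$, let $a_\gamma(n)=1$ if $n=d^\gamma$ for some $d\in\mathbb{N}$ and $a_\gamma(n)=0$ otherwise, and put $f^{[\gamma]}(n):=a_\gamma(n)f(n)$. For an arithmetic function $f$, $L(s;f):=\sum_{n\ge1}f(n)n^{-s}$ and $\sigma(f)\in\mathbb{R}\cup\{\pm\infty\}$ is the abscissa of absolute convergence of this series. For $\gamma_1,\ldots,\gamma_m\in\mathbb{N}$ and arithmetic functions $f_1,\ldots,f_{m+1}$, the $(\gamma_1,\ldots,\gamma_m)$-convolution is the arithmetic function \[ (f_{m+1}*_{\gamma_m}\cdots*_{\gamma_1}f_1)(n):=\sum_{\substack{(d_1,\ldots,d_m)\in\mathbb{N}^m\\ d_m^{\gamma_m}\mid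 d_{m-1}^{\gamma_{m-1}}\mid\cdots\mid d_1^{\gamma_1}\mid n}} f_1\Bigl(\frac{n}{d_1^{\gamma_1}}\Bigr)f_2\Bigl(\frac{d_1^{\gamma_1}}{d_2^{\gamma_2}}\Bigr)\cdots f_m\Bigl(\frac{d_{m-1}^{\gamma_{m-1}}}{d_m^{\gamma_m}}\Bigr)f_{m+1}\bigl(d_m^{\gamma_m}\bigr). \] *)

theory Defs
  imports "HOL-Analysis.Analysis"
begin

text \<open>Arithmetic functions are modelled as nat => complex; the value at 0 is never used.\<close>

definition dirichlet_L :: "complex \<Rightarrow> (nat \<Rightarrow> complex) \<Rightarrow> complex" where
  "dirichlet_L s f = (\<Sum>n. f (Suc n) * of_nat (Suc n) powr (- s))"

text \<open>Abscissa of absolute convergence, in the extended reals (Inf of empty set is +infinity).\<close>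
definition abs_abscissa :: "(nat \<Rightarrow> complex) \<Rightarrow> ereal" where
  "abs_abscissa f = Inf {ereal x | x. summable (\<lambda>n. norm (f (Suc n)) * real (Suc n) powr (- x))}"

definition is_gamma_power :: "nat \<Rightarrow> nat \<Rightarrow> bool" where
  "is_gamma_power \<gamma> n \<longleftrightarrow> (\<exists>d::nat. d \<ge> 1 \<and> n = d ^ \<gamma>)"

definition restr_power :: "nat \<Rightarrow> (nat \<Rightarrow> complex) \<Rightarrow> nat \<Rightarrow> complex" where
  "restr_power \<gamma> f n = (if is_gamma_power \<gamma> n then f n else 0)"

text \<open>Since each gamma_i >= 1, d_i^gamma_i | n forces d_i <= n,
  so restricting d_i to {1..n} loses nothing.\<close>
definition gconv :: "nat \<Rightarrow> (nat \<Rightarrow> nat) \<Rightarrow> (nat \<Rightarrow> nat \<Rightarrow> complex) \<Rightarrow> nat \<Rightarrow> complex" where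
  "gconv m \<gamma> f n =
     (let D = (\<lambda>d i. if i = 0 then n else if i = Suc m then 1 else d i ^ \<gamma> i) in
      \<Sum>d \<in> {d \<in> {1..m} \<rightarrow>\<^sub>E {1..n}. \<forall>i\<in>{1..m}. D d i dvd D d (i - 1)}.
         \<Prod>j\<in>{1..Suc m}. f j (D d (j - 1) div D d j))"

end

theory Submission
  imports Defs
begin

(* For a chain d_1, ..., d_m in the convolution sum write D_0 = n, D_i = d_i^gamma_i and
   D_(m+1) = 1.  Since gamma_(j-1) divides gamma_j, each quotient D_(j-1) / D_j is a power
   k_j^gamma_(j-1), and d_i = prod_(l>i) k_l^(gamma_(l-1) / gamma_i) recovers the chain from k.
   So the chains correspond to the tuples of positive integers k_1, ..., k_(m+1) with
   prod_j k_j^gamma_(j-1) = n, and the convolution at n is the coefficient of n^(-s) in the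
   product over j of the series sum_k f_j(k^gamma_(j-1)) (k^gamma_(j-1))^(-s), which are the
   L-series of the restricted functions.  Absolute convergence allows the product to be
   expanded and regrouped by n. *)

section \<open>Dirichlet series as unordered sums\<close>

lemma has_sum_atLeast_1_iff:
  "(g has_sum L) {1::nat..} \<longleftrightarrow> ((\<lambda>n. g (Suc n)) has_sum L) UNIV"
  using has_sum_reindex[of Suc UNIV g L] by (simp add: greaterThan_0 atLeast_Suc_greaterThan o_def)

lemma summable_on_atLeast_1_iff:
  "g summable_on {1::nat..} \<longleftrightarrow> (\<lambda>n. g (Suc n)) summable_on UNIV"
  unfolding summable_on_def has_sum_atLeast_1_iff ..

lemma dirichlet_L_eqI:
  assumes "((\<lambda>n. f n * of_nat n powr - s) has_sum L) {1..}"
  shows "dirichlet_L s f = L"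
  using assms unfolding dirichlet_L_def has_sum_atLeast_1_iff
  by (auto dest: has_sum_imp_sums sums_unique)

lemma summable_on_dirichlet_if_abs_abscissa_less:
  assumes "abs_abscissa f < ereal (Re s)"
  shows "(\<lambda>n. f n * of_nat n powr - s) summable_on {1..}"
proof -
  obtain x where x: "x < Re s" and summable_x: "summable (\<lambda>n. norm (f (Suc n)) * real (Suc n) powr - x)"
    using assms unfolding abs_abscissa_def Inf_less_iff by auto
  have "summable (\<lambda>n. norm (f (Suc n) * of_nat (Suc n) powr - s))"
  proof (rule summable_comparison_test'[OF summable_x])
    fix n :: nat
    have "real (Suc n) powr - Re s \<le> real (Suc n) powr - x"
      using x by (intro powr_mono) auto
    then show "norm (norm (f (Suc n) * of_nat (Suc n) powr - s)) \<le> norm (f (Suc n)) * real (Suc n) powr - x"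
      by (simp add: norm_mult norm_powr_real_powr mult_left_mono)
  qed
  then show ?thesis
    unfolding summable_on_atLeast_1_iff by (rule norm_summable_imp_summable_on)
qed

lemma has_sum_dirichlet_restr_power:
  fixes f :: "nat \<Rightarrow> complex"
  assumes "0 < \<gamma>" and summable: "(\<lambda>n. f n * of_nat n powr - s) summable_on {1..}"
  shows "((\<lambda>k. f (k ^ \<gamma>) * of_nat (k ^ \<gamma>) powr - s) has_sum dirichlet_L s (restr_power \<gamma> f)) {1..}"
proof -
  define t where "t n = f n * of_nat n powr - s" for n
  define powers where "powers = (\<lambda>k::nat. k ^ \<gamma>) ` {1..}"
  have inj: "inj_on (\<lambda>k::nat. k ^ \<gamma>) {1..}"
    using \<open>0 < \<gamma>\<close> by (auto intro: inj_onI simp: power_eq_iff_eq_base)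
  have "powers \<subseteq> {1..}"
    unfolding powers_def by (intro image_subsetI) simp
  then have "(t has_sum infsum t powers) powers"
    using summable_on_subset_banach[OF summable] unfolding t_def by (intro has_sum_infsum)
  moreover have "is_gamma_power \<gamma> n \<longleftrightarrow> n \<in> powers" for n
    unfolding is_gamma_power_def powers_def by auto
  ultimately have "((\<lambda>n. restr_power \<gamma> f n * of_nat n powr - s) has_sum infsum t powers) {1..}"
    using \<open>powers \<subseteq> {1..}\<close> by (subst has_sum_cong_neutral) (auto simp: restr_power_def t_def)
  then have "dirichlet_L s (restr_power \<gamma> f) = infsum t powers"
    by (rule dirichlet_L_eqI)
  moreover have "((t \<circ> (\<lambda>k. k ^ \<gamma>)) has_sum infsum t powers) {1..}"
    using \<open>(t has_sum _) powers\<close> unfolding powers_def has_sum_reindex[OF inj] .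
  ultimately show ?thesis
    by (simp add: t_def o_def)
qed

lemma has_sum_prod_PiE_by_fibres:
  fixes b :: "'a \<Rightarrow> 'b::countable \<Rightarrow> 'c::{real_normed_field,banach,second_countable_topology}"
    and w :: "('a \<Rightarrow> 'b) \<Rightarrow> 'd"
  assumes "finite A" and abs_summable: "\<And>j. j \<in> A \<Longrightarrow> (\<lambda>x. norm (b j x)) summable_on B j"
    and "w ` PiE A B \<subseteq> C"
  shows "((\<lambda>n. \<Sum>\<^sub>\<infinity>k\<in>{k \<in> PiE A B. w k = n}. \<Prod>j\<in>A. b j (k j))
           has_sum (\<Prod>j\<in>A. infsum (b j) (B j))) C"
proof -
  define H where "H k = (\<Prod>j\<in>A. b j (k j))" for k
  have "Infinite_Set_Sum.abs_summable_on H (PiE A B)"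
    unfolding H_def using assms(1) abs_summable
    by (intro abs_summable_on_prod_PiE) (auto simp: abs_summable_equivalent[symmetric])
  then have "H summable_on PiE A B"
    by (simp add: abs_summable_equivalent[symmetric] abs_summable_summable)
  moreover have "infsum H (PiE A B) = (\<Prod>j\<in>A. infsum (b j) (B j))"
    unfolding H_def using assms(1) abs_summable by (rule infsum_prod_PiE_abs)
  ultimately have "(H has_sum (\<Prod>j\<in>A. infsum (b j) (B j))) (PiE A B)"
    by (metis has_sum_infsum)
  also have "?this \<longleftrightarrow> ((\<lambda>(n, k). H k) has_sum (\<Prod>j\<in>A. infsum (b j) (B j)))
      (Sigma C (\<lambda>n. {k \<in> PiE A B. w k = n}))"
    using assms(3) by (intro has_sum_reindex_bij_witness[where i = snd and j = "\<lambda>k. (w k, k)"]) auto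
  finally have sum_Sigma: "((\<lambda>(n, k). H k) has_sum (\<Prod>j\<in>A. infsum (b j) (B j)))
      (Sigma C (\<lambda>n. {k \<in> PiE A B. w k = n}))" .
  have fibre: "(H has_sum infsum H {k \<in> PiE A B. w k = n}) {k \<in> PiE A B. w k = n}" for n
    by (rule has_sum_infsum, rule summable_on_subset_banach[OF \<open>H summable_on PiE A B\<close>]) auto
  have "((\<lambda>n. infsum H {k \<in> PiE A B. w k = n}) has_sum (\<Prod>j\<in>A. infsum (b j) (B j))) C"
    using sum_Sigma by (rule has_sum_SigmaD) (simp add: fibre)
  then show ?thesis
    unfolding H_def .
qed

lemma prod_of_nat_powr:
  "(\<Prod>j\<in>A. (of_nat (x j) :: complex) powr z) = of_nat (\<Prod>j\<in>A. x j) powr z"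
proof (induction A rule: infinite_finite_induct)
  case (insert a A)
  have "(of_nat (x a) * of_nat (\<Prod>j\<in>A. x j) :: complex) powr z
      = of_nat (x a) powr z * of_nat (\<Prod>j\<in>A. x j) powr z"
    by (rule powr_times_real) (auto simp del: of_nat_prod)
  then show ?case
    using insert by (simp del: of_nat_prod)
qed simp_all

section \<open>Chains of power divisors\<close>

lemma ball_atLeast_1_atMost_iff: "(\<forall>i\<in>{1..m}. P i) \<longleftrightarrow> (\<forall>i<m. P (Suc i))"
proof
  assume P: "\<forall>i<m. P (Suc i)"
  show "\<forall>i\<in>{1..m}. P i"
  proof
    fix i assume "i \<in> {1..m}"
    then obtain j where "i = Suc j" and "j < m"
      by (cases i) auto
    with P show "P i"
      by simp
  qed
qed simp

lemma div_eq_div_mult_div: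
  fixes a b c :: nat
  assumes "b dvd a" and "c dvd b"
  shows "a div c = a div b * (b div c)"
proof -
  from assms obtain x y where "a = b * x" "b = c * y"
    by (auto elim!: dvdE)
  then show ?thesis
    by (cases "c = 0"; cases "y = 0") auto
qed

definition chain_of_tuple :: "nat \<Rightarrow> (nat \<Rightarrow> nat) \<Rightarrow> (nat \<Rightarrow> nat) \<Rightarrow> nat \<Rightarrow> nat" where
  "chain_of_tuple m \<gamma> k i = (\<Prod>l\<in>{Suc i..Suc m}. k l ^ (\<gamma> (l - 1) div \<gamma> i))"

definition tuple_of_chain :: "(nat \<Rightarrow> nat) \<Rightarrow> (nat \<Rightarrow> nat) \<Rightarrow> nat \<Rightarrow> nat" where
  "tuple_of_chain \<gamma> c j = c (j - 1) div c j ^ (\<gamma> j div \<gamma> (j - 1))"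

definition extend_chain :: "nat \<Rightarrow> nat \<Rightarrow> (nat \<Rightarrow> nat) \<Rightarrow> nat \<Rightarrow> nat" where
  "extend_chain m n d i = (if i = 0 then n else if i = Suc m then 1 else d i)"

(* The index set of gconv, with d_(i+1)^(gamma_(i+1)) | d_i^(gamma_i) already replaced by the
   equivalent d_(i+1)^(gamma_(i+1)/gamma_i) | d_i. *)
definition divisor_chains :: "nat \<Rightarrow> (nat \<Rightarrow> nat) \<Rightarrow> nat \<Rightarrow> (nat \<Rightarrow> nat) set" where
  "divisor_chains m \<gamma> n = {d \<in> {1..m} \<rightarrow>\<^sub>E {1..n}.
     \<forall>i\<le>m. extend_chain m n d (Suc i) ^ (\<gamma> (Suc i) div \<gamma> i) dvd extend_chain m n d i}"

definition power_tuples :: "nat \<Rightarrow> (nat \<Rightarrow> nat) \<Rightarrow> nat \<Rightarrow> (nat \<Rightarrow> nat) set" where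
  "power_tuples m \<gamma> n = {k \<in> {1..Suc m} \<rightarrow>\<^sub>E {1..}. (\<Prod>j\<in>{1..Suc m}. k j ^ \<gamma> (j - 1)) = n}"

lemma chain_of_tuple_Suc_self [simp]: "chain_of_tuple m \<gamma> k (Suc m) = 1"
  by (simp add: chain_of_tuple_def)

lemma chain_of_tuple_restrict [simp]:
  "chain_of_tuple m \<gamma> (restrict k {1..Suc m}) i = chain_of_tuple m \<gamma> k i"
  unfolding chain_of_tuple_def by (intro prod.cong) auto

lemma chain_of_tuple_0:
  "\<gamma> 0 = 1 \<Longrightarrow> chain_of_tuple m \<gamma> k 0 = (\<Prod>l\<in>{1..Suc m}. k l ^ \<gamma> (l - 1))"
  by (simp add: chain_of_tuple_def)

lemma chain_of_tuple_pos:
  assumes "\<And>l. l \<in> {1..Suc m} \<Longrightarrow> 0 < k l"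
  shows "0 < chain_of_tuple m \<gamma> k i"
  unfolding chain_of_tuple_def using assms by (intro prod_pos) auto

lemma chain_of_tuple_dvd_prod:
  "chain_of_tuple m \<gamma> k i dvd (\<Prod>l\<in>{1..Suc m}. k l ^ \<gamma> (l - 1))"
proof -
  have "chain_of_tuple m \<gamma> k i dvd (\<Prod>l\<in>{Suc i..Suc m}. k l ^ \<gamma> (l - 1))"
    unfolding chain_of_tuple_def by (intro prod_dvd_prod le_imp_power_dvd div_le_dividend)
  also have "\<dots> dvd (\<Prod>l\<in>{1..Suc m}. k l ^ \<gamma> (l - 1))"
    by (intro prod_dvd_prod_subset) auto
  finally show ?thesis .
qed

lemma extend_chain_of_tuple:
  assumes "\<gamma> 0 = 1" and "k \<in> power_tuples m \<gamma> n" and "i \<le> Suc m"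
  shows "extend_chain m n (restrict (chain_of_tuple m \<gamma> k) {1..m}) i = chain_of_tuple m \<gamma> k i"
  using assms by (auto simp: extend_chain_def chain_of_tuple_0 power_tuples_def)

lemma power_tuples_pos:
  assumes "k \<in> power_tuples m \<gamma> n" and "j \<in> {1..Suc m}"
  shows "0 < k j"
proof -
  have "k j \<in> {1..}"
    using assms unfolding power_tuples_def by (blast intro: PiE_mem)
  then show ?thesis
    by simp
qed

lemma finite_power_tuples:
  assumes "\<And>i. i \<le> m \<Longrightarrow> 0 < \<gamma> i"
  shows "finite (power_tuples m \<gamma> n)"
proof (rule finite_subset)
  show "power_tuples m \<gamma> n \<subseteq> {1..Suc m} \<rightarrow>\<^sub>E {1..n}"
  proof
    fix k assume k: "k \<in> power_tuples m \<gamma> n"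
    then have n: "(\<Prod>j\<in>{1..Suc m}. k j ^ \<gamma> (j - 1)) = n"
      by (simp add: power_tuples_def)
    have "k j \<in> {1..n}" if j: "j \<in> {1..Suc m}" for j
    proof -
      have "0 < n"
        unfolding n[symmetric] using power_tuples_pos[OF k] by (intro prod_pos) simp
      have "k j \<le> k j ^ \<gamma> (j - 1)"
        using power_tuples_pos[OF k j] j assms[of "j - 1"] by (intro self_le_power) auto
      also have "\<dots> \<le> n"
        using \<open>0 < n\<close> j unfolding n[symmetric] by (intro dvd_imp_le dvd_prodI) auto
      finally show ?thesis
        using power_tuples_pos[OF k j] by simp
    qed
    then show "k \<in> {1..Suc m} \<rightarrow>\<^sub>E {1..n}"
      using k by (auto simp: power_tuples_def PiE_iff)
  qed
qed (simp add: finite_PiE)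

lemma has_sum_power_tuples:
  fixes b :: "nat \<Rightarrow> nat \<Rightarrow> complex"
  assumes "\<And>j. j \<in> {1..Suc m} \<Longrightarrow> (\<lambda>k. norm (b j k)) summable_on {1..}"
  shows "((\<lambda>n. \<Sum>\<^sub>\<infinity>k\<in>power_tuples m \<gamma> n. \<Prod>j\<in>{1..Suc m}. b j (k j))
           has_sum (\<Prod>j\<in>{1..Suc m}. infsum (b j) {1..})) {1..}"
  unfolding power_tuples_def
proof (rule has_sum_prod_PiE_by_fibres)
  show "(\<lambda>k :: nat \<Rightarrow> nat. \<Prod>j\<in>{1..Suc m}. k j ^ \<gamma> (j - 1)) ` ({1..Suc m} \<rightarrow>\<^sub>E {1..}) \<subseteq> {1..}"
    by (intro image_subsetI, simp only: atLeast_iff, intro prod_ge_1 one_le_power) (auto simp: PiE_iff)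
qed (use assms in auto)

context
  fixes m :: nat and \<gamma> :: "nat \<Rightarrow> nat"
  assumes gamma_pos: "\<And>i. i \<le> m \<Longrightarrow> 0 < \<gamma> i"
    and gamma_dvd_Suc: "\<And>i. i < m \<Longrightarrow> \<gamma> i dvd \<gamma> (Suc i)"
begin

lemma gamma_dvd_le: "i \<le> j \<Longrightarrow> j \<le> m \<Longrightarrow> \<gamma> i dvd \<gamma> j"
proof (induction j rule: dec_induct)
  case (step j)
  have "\<gamma> i dvd \<gamma> j"
    using step.IH step.prems by simp
  moreover have "\<gamma> j dvd \<gamma> (Suc j)"
    using gamma_dvd_Suc step.prems by simp
  ultimately show ?case
    by (rule dvd_trans)
qed simp

lemma power_gamma_Suc:
  fixes b :: nat
  assumes "i < m"
  shows "b ^ \<gamma> (Suc i) = (b ^ (\<gamma> (Suc i) div \<gamma> i)) ^ \<gamma> i"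
proof -
  have "b ^ \<gamma> (Suc i) = b ^ (\<gamma> (Suc i) div \<gamma> i * \<gamma> i)"
    using gamma_dvd_Suc[OF assms] by simp
  also have "\<dots> = (b ^ (\<gamma> (Suc i) div \<gamma> i)) ^ \<gamma> i"
    by (rule power_mult)
  finally show ?thesis .
qed

lemma chain_of_tuple_Suc:
  assumes "i \<le> m"
  shows "chain_of_tuple m \<gamma> k i = k (Suc i) * chain_of_tuple m \<gamma> k (Suc i) ^ (\<gamma> (Suc i) div \<gamma> i)"
proof -
  have "chain_of_tuple m \<gamma> k (Suc i) ^ (\<gamma> (Suc i) div \<gamma> i)
      = (\<Prod>l\<in>{Suc (Suc i)..Suc m}. k l ^ (\<gamma> (l - 1) div \<gamma> (Suc i) * (\<gamma> (Suc i) div \<gamma> i)))"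
    unfolding chain_of_tuple_def prod_power_distrib power_mult ..
  also have "\<dots> = (\<Prod>l\<in>{Suc (Suc i)..Suc m}. k l ^ (\<gamma> (l - 1) div \<gamma> i))"
    by (intro prod.cong refl arg_cong[where f = "power _"] div_eq_div_mult_div[symmetric]
        gamma_dvd_le gamma_dvd_Suc) auto
  finally have tail: "chain_of_tuple m \<gamma> k (Suc i) ^ (\<gamma> (Suc i) div \<gamma> i)
      = (\<Prod>l\<in>{Suc (Suc i)..Suc m}. k l ^ (\<gamma> (l - 1) div \<gamma> i))" .
  have "chain_of_tuple m \<gamma> k i
      = k (Suc i) ^ (\<gamma> i div \<gamma> i) * (\<Prod>l\<in>{Suc (Suc i)..Suc m}. k l ^ (\<gamma> (l - 1) div \<gamma> i))"
    unfolding chain_of_tuple_def using assms by (subst prod.atLeast_Suc_atMost) auto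
  also have "\<dots> = k (Suc i) * chain_of_tuple m \<gamma> k (Suc i) ^ (\<gamma> (Suc i) div \<gamma> i)"
    using gamma_pos[OF assms] by (simp only: tail div_self neq0_conv power_one_right)
  finally show ?thesis .
qed

lemma tuple_of_chain_of_tuple:
  assumes "\<And>l. l \<in> {1..Suc m} \<Longrightarrow> 0 < k l" and "i \<le> m"
  shows "tuple_of_chain \<gamma> (chain_of_tuple m \<gamma> k) (Suc i) = k (Suc i)"
  using chain_of_tuple_Suc[OF assms(2)] chain_of_tuple_pos[OF assms(1)]
  by (simp add: tuple_of_chain_def)

lemma chain_of_tuple_of_chain:
  assumes "c (Suc m) = 1" and "\<And>i. i \<le> m \<Longrightarrow> c (Suc i) ^ (\<gamma> (Suc i) div \<gamma> i) dvd c i"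
    and "i \<le> Suc m"
  shows "chain_of_tuple m \<gamma> (tuple_of_chain \<gamma> c) i = c i"
  using assms(3)
proof (induction i rule: inc_induct)
  case (step i)
  let ?k = "tuple_of_chain \<gamma> c" and ?r = "\<gamma> (Suc i) div \<gamma> i"
  have "i \<le> m"
    using step.hyps(2) by simp
  then have "chain_of_tuple m \<gamma> ?k i = ?k (Suc i) * chain_of_tuple m \<gamma> ?k (Suc i) ^ ?r"
    by (rule chain_of_tuple_Suc[where k = "tuple_of_chain \<gamma> c"])
  also have "\<dots> = ?k (Suc i) * c (Suc i) ^ ?r"
    unfolding step.IH ..
  also have "\<dots> = c i"
    unfolding tuple_of_chain_def using assms(2)[OF \<open>i \<le> m\<close>] by simp
  finally show ?case .
qed (simp add: assms(1))

lemma tuple_of_divisor_chain: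
  assumes "\<gamma> 0 = 1" and "d \<in> divisor_chains m \<gamma> n" and "1 \<le> n"
  defines "k \<equiv> restrict (tuple_of_chain \<gamma> (extend_chain m n d)) {1..Suc m}"
  shows "k \<in> power_tuples m \<gamma> n" and "restrict (chain_of_tuple m \<gamma> k) {1..m} = d"
proof -
  let ?c = "extend_chain m n d"
  have d: "d \<in> {1..m} \<rightarrow>\<^sub>E {1..n}"
    and dvd: "\<And>i. i \<le> m \<Longrightarrow> ?c (Suc i) ^ (\<gamma> (Suc i) div \<gamma> i) dvd ?c i"
    using assms(2) by (auto simp: divisor_chains_def)
  have c_pos: "0 < ?c i" if "i \<le> m" for i
    using d that \<open>1 \<le> n\<close> by (auto simp: extend_chain_def PiE_iff Suc_le_eq)
  have chain_k: "chain_of_tuple m \<gamma> k i = ?c i" if "i \<le> Suc m" for i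
    unfolding k_def chain_of_tuple_restrict
    using that dvd by (intro chain_of_tuple_of_chain) (auto simp: extend_chain_def)
  show "k \<in> power_tuples m \<gamma> n"
    unfolding power_tuples_def
  proof (intro CollectI conjI)
    show "k \<in> {1..Suc m} \<rightarrow>\<^sub>E {1..}"
    proof (rule PiE_I)
      fix j assume "j \<in> {1..Suc m}"
      then obtain i where "j = Suc i" "i \<le> m"
        by (cases j) auto
      then show "k j \<in> {1..}"
        using c_pos[of i] dvd[of i] by (auto simp: k_def tuple_of_chain_def elim!: dvdE)
    qed (auto simp: k_def)
    show "(\<Prod>j\<in>{1..Suc m}. k j ^ \<gamma> (j - 1)) = n"
      using chain_k[of 0] by (simp add: chain_of_tuple_0 assms(1) extend_chain_def)
  qed
  show "restrict (chain_of_tuple m \<gamma> k) {1..m} = d"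
    using d chain_k by (auto simp: extend_chain_def PiE_iff extensional_def)
qed

lemma divisor_chain_of_tuple:
  assumes "\<gamma> 0 = 1" and k: "k \<in> power_tuples m \<gamma> n"
  defines "d \<equiv> restrict (chain_of_tuple m \<gamma> k) {1..m}"
  shows "d \<in> divisor_chains m \<gamma> n" and "restrict (tuple_of_chain \<gamma> (extend_chain m n d)) {1..Suc m} = k"
proof -
  have n: "(\<Prod>j\<in>{1..Suc m}. k j ^ \<gamma> (j - 1)) = n"
    using k by (simp add: power_tuples_def)
  have c: "extend_chain m n d i = chain_of_tuple m \<gamma> k i" if "i \<le> Suc m" for i
    unfolding d_def using assms(1) k that by (rule extend_chain_of_tuple)
  have "0 < n"
    unfolding n[symmetric] using power_tuples_pos[OF k] by (intro prod_pos) simp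
  have "0 < chain_of_tuple m \<gamma> k i" for i
    using power_tuples_pos[OF k] by (rule chain_of_tuple_pos)
  then have "chain_of_tuple m \<gamma> k i \<in> {1..n}" for i
    using chain_of_tuple_dvd_prod[of m \<gamma> k i] \<open>0 < n\<close> unfolding n by (auto intro: dvd_imp_le)
  then have "d \<in> {1..m} \<rightarrow>\<^sub>E {1..n}"
    by (simp add: d_def)
  moreover have "extend_chain m n d (Suc i) ^ (\<gamma> (Suc i) div \<gamma> i) dvd extend_chain m n d i" if "i \<le> m" for i
    using that chain_of_tuple_Suc[OF that, of k] by (simp add: c)
  ultimately show "d \<in> divisor_chains m \<gamma> n"
    by (simp add: divisor_chains_def)
  show "restrict (tuple_of_chain \<gamma> (extend_chain m n d)) {1..Suc m} = k"
  proof
    fix j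
    show "restrict (tuple_of_chain \<gamma> (extend_chain m n d)) {1..Suc m} j = k j"
    proof (cases "j \<in> {1..Suc m}")
      case True
      then obtain i where "j = Suc i" "i \<le> m"
        by (cases j) auto
      then show ?thesis
        using tuple_of_chain_of_tuple[where i = i, OF power_tuples_pos[OF k]]
        by (simp add: tuple_of_chain_def c)
    next
      case False
      then show ?thesis
        using k by (auto simp: power_tuples_def PiE_iff extensional_def)
    qed
  qed
qed

lemma bij_betw_divisor_chains_power_tuples:
  assumes "\<gamma> 0 = 1" and "1 \<le> n"
  shows "bij_betw (\<lambda>d. restrict (tuple_of_chain \<gamma> (extend_chain m n d)) {1..Suc m})
           (divisor_chains m \<gamma> n) (power_tuples m \<gamma> n)"
  using tuple_of_divisor_chain[OF assms(1) _ assms(2)] divisor_chain_of_tuple[OF assms(1)]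
  by (intro bij_betwI[where g = "\<lambda>k. restrict (chain_of_tuple m \<gamma> k) {1..m}"]) auto

lemma gconv_eq_sum_divisor_chains:
  assumes "\<gamma> 0 = 1"
  shows "gconv m \<gamma> f n = (\<Sum>d\<in>divisor_chains m \<gamma> n.
           \<Prod>j\<in>{1..Suc m}. f j (tuple_of_chain \<gamma> (extend_chain m n d) j ^ \<gamma> (j - 1)))"
proof -
  let ?c = "extend_chain m n"
  have D: "(\<lambda>d i. if i = 0 then n else if i = Suc m then 1 else d i ^ \<gamma> i) = (\<lambda>d i. ?c d i ^ \<gamma> i)"
    using assms by (auto simp: extend_chain_def fun_eq_iff)
  have "gconv m \<gamma> f n
      = (\<Sum>d\<in>{d \<in> {1..m} \<rightarrow>\<^sub>E {1..n}. \<forall>i\<in>{1..m}. ?c d i ^ \<gamma> i dvd ?c d (i - 1) ^ \<gamma> (i - 1)}.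
          \<Prod>j\<in>{1..Suc m}. f j (?c d (j - 1) ^ \<gamma> (j - 1) div ?c d j ^ \<gamma> j))"
    unfolding gconv_def D Let_def by (rule refl)
  also have "{d \<in> {1..m} \<rightarrow>\<^sub>E {1..n}. \<forall>i\<in>{1..m}. ?c d i ^ \<gamma> i dvd ?c d (i - 1) ^ \<gamma> (i - 1)}
      = divisor_chains m \<gamma> n"
  proof -
    have "(\<forall>i\<in>{1..m}. ?c d i ^ \<gamma> i dvd ?c d (i - 1) ^ \<gamma> (i - 1))
        \<longleftrightarrow> (\<forall>i<m. ?c d (Suc i) ^ \<gamma> (Suc i) dvd ?c d i ^ \<gamma> i)" for d
      using ball_atLeast_1_atMost_iff[where P = "\<lambda>i. ?c d i ^ \<gamma> i dvd ?c d (i - 1) ^ \<gamma> (i - 1)"]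
      by simp
    also have "\<dots> d \<longleftrightarrow> (\<forall>i<m. ?c d (Suc i) ^ (\<gamma> (Suc i) div \<gamma> i) dvd ?c d i)" for d
      using gamma_pos by (simp add: power_gamma_Suc)
    also have "\<dots> d \<longleftrightarrow> (\<forall>i\<le>m. ?c d (Suc i) ^ (\<gamma> (Suc i) div \<gamma> i) dvd ?c d i)" for d
      by (auto simp: extend_chain_def le_less)
    finally show ?thesis
      by (simp add: divisor_chains_def)
  qed
  also have "(\<Sum>d\<in>divisor_chains m \<gamma> n. \<Prod>j\<in>{1..Suc m}. f j (?c d (j - 1) ^ \<gamma> (j - 1) div ?c d j ^ \<gamma> j))
      = (\<Sum>d\<in>divisor_chains m \<gamma> n. \<Prod>j\<in>{1..Suc m}. f j (tuple_of_chain \<gamma> (?c d) j ^ \<gamma> (j - 1)))"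
  proof (intro sum.cong prod.cong refl arg_cong[where f = "f _"])
    fix d j assume d: "d \<in> divisor_chains m \<gamma> n" and "j \<in> {1..Suc m}"
    then obtain i where i: "j = Suc i" "i \<le> m"
      by (cases j) auto
    have dvd: "?c d (Suc i) ^ (\<gamma> (Suc i) div \<gamma> i) dvd ?c d i"
      using d i by (simp add: divisor_chains_def)
    have "?c d (Suc i) ^ \<gamma> (Suc i) = (?c d (Suc i) ^ (\<gamma> (Suc i) div \<gamma> i)) ^ \<gamma> i"
      using i power_gamma_Suc[of i] by (cases "i = m") (auto simp: extend_chain_def)
    then show "?c d (j - 1) ^ \<gamma> (j - 1) div ?c d j ^ \<gamma> j = tuple_of_chain \<gamma> (?c d) j ^ \<gamma> (j - 1)"
      using dvd i by (simp add: tuple_of_chain_def div_power)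
  qed
  finally show ?thesis .
qed

lemma gconv_eq_sum_power_tuples:
  assumes "\<gamma> 0 = 1" and "1 \<le> n"
  shows "gconv m \<gamma> f n = (\<Sum>k\<in>power_tuples m \<gamma> n. \<Prod>j\<in>{1..Suc m}. f j (k j ^ \<gamma> (j - 1)))"
  unfolding gconv_eq_sum_divisor_chains[OF assms(1)]
    sum.reindex_bij_betw[OF bij_betw_divisor_chains_power_tuples[OF assms], symmetric]
  by (intro sum.cong prod.cong) auto

lemma infsum_power_tuples_eq_gconv:
  assumes "\<gamma> 0 = 1" and "1 \<le> n"
  shows "(\<Sum>\<^sub>\<infinity>k\<in>power_tuples m \<gamma> n. \<Prod>j\<in>{1..Suc m}. f j (k j ^ \<gamma> (j - 1)) * of_nat (k j ^ \<gamma> (j - 1)) powr - s)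
       = gconv m \<gamma> f n * of_nat n powr - s"
proof -
  have summand: "(\<Prod>j\<in>{1..Suc m}. f j (k j ^ \<gamma> (j - 1)) * of_nat (k j ^ \<gamma> (j - 1)) powr - s)
      = (\<Prod>j\<in>{1..Suc m}. f j (k j ^ \<gamma> (j - 1))) * of_nat n powr - s" if "k \<in> power_tuples m \<gamma> n" for k
  proof -
    have n: "(\<Prod>j\<in>{1..Suc m}. k j ^ \<gamma> (j - 1)) = n"
      using that by (simp add: power_tuples_def)
    show ?thesis
      unfolding prod.distrib prod_of_nat_powr n ..
  qed
  have "finite (power_tuples m \<gamma> n)"
    using gamma_pos by (rule finite_power_tuples)
  then have "(\<Sum>\<^sub>\<infinity>k\<in>power_tuples m \<gamma> n. \<Prod>j\<in>{1..Suc m}. f j (k j ^ \<gamma> (j - 1)) * of_nat (k j ^ \<gamma> (j - 1)) powr - s)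
      = (\<Sum>k\<in>power_tuples m \<gamma> n. \<Prod>j\<in>{1..Suc m}. f j (k j ^ \<gamma> (j - 1)) * of_nat (k j ^ \<gamma> (j - 1)) powr - s)"
    by (rule infsum_finite)
  also have "\<dots> = (\<Sum>k\<in>power_tuples m \<gamma> n. (\<Prod>j\<in>{1..Suc m}. f j (k j ^ \<gamma> (j - 1))) * of_nat n powr - s)"
    by (rule sum.cong[OF refl summand])
  also have "\<dots> = gconv m \<gamma> f n * of_nat n powr - s"
    unfolding gconv_eq_sum_power_tuples[OF assms] sum_distrib_right ..
  finally show ?thesis .
qed

end

theorem proposition2p1:
  fixes m :: nat and f :: "nat \<Rightarrow> nat \<Rightarrow> complex" and \<gamma> :: "nat \<Rightarrow> nat" and s :: complex
  assumes "m \<ge> 1"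
    and "\<forall>i\<in>{0..m}. \<gamma> i \<ge> 1"
    and "\<gamma> 0 = 1"
    and "\<forall>i\<in>{1..m}. \<gamma> (i - 1) dvd \<gamma> i"
    and "\<forall>j\<in>{1..m+1}. ereal (Re s) > abs_abscissa (f j)"
  shows "dirichlet_L s (gconv m \<gamma> f) = (\<Prod>j\<in>{1..m+1}. dirichlet_L s (restr_power (\<gamma> (j - 1)) (f j)))"
proof -
  have gamma_pos: "0 < \<gamma> i" if "i \<le> m" for i
    using assms(2)[rule_format, of i] that by simp
  have gamma_dvd_Suc: "\<gamma> i dvd \<gamma> (Suc i)" if "i < m" for i
    using assms(4)[rule_format, of "Suc i"] that by simp
  define b where "b j k = f j (k ^ \<gamma> (j - 1)) * of_nat (k ^ \<gamma> (j - 1)) powr - s" for j k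
  have b: "(b j has_sum dirichlet_L s (restr_power (\<gamma> (j - 1)) (f j))) {1..}" if "j \<in> {1..Suc m}" for j
    unfolding b_def using that gamma_pos assms(5)
    by (intro has_sum_dirichlet_restr_power summable_on_dirichlet_if_abs_abscissa_less) auto
  have norm_summable: "(\<lambda>k. norm (b j k)) summable_on {1..}" if "j \<in> {1..Suc m}" for j
    using has_sum_imp_summable[OF b[OF that]] summable_on_iff_abs_summable_on_complex by blast
  have "((\<lambda>n. \<Sum>\<^sub>\<infinity>k\<in>power_tuples m \<gamma> n. \<Prod>j\<in>{1..Suc m}. b j (k j))
      has_sum (\<Prod>j\<in>{1..Suc m}. infsum (b j) {1..})) {1..}"
    using norm_summable by (rule has_sum_power_tuples)
  moreover have "(\<Sum>\<^sub>\<infinity>k\<in>power_tuples m \<gamma> n. \<Prod>j\<in>{1..Suc m}. b j (k j)) = gconv m \<gamma> f n * of_nat n powr - s"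
    if "n \<in> {1..}" for n
    unfolding b_def using that by (intro infsum_power_tuples_eq_gconv gamma_pos gamma_dvd_Suc assms(3)) auto
  ultimately have "((\<lambda>n. gconv m \<gamma> f n * of_nat n powr - s) has_sum (\<Prod>j\<in>{1..Suc m}. infsum (b j) {1..})) {1..}"
    by (rule has_sum_cong[THEN iffD1, rotated])
  moreover have "(\<Prod>j\<in>{1..Suc m}. infsum (b j) {1..}) = (\<Prod>j\<in>{1..m+1}. dirichlet_L s (restr_power (\<gamma> (j - 1)) (f j)))"
  proof (rule prod.cong)
    fix j assume "j \<in> {1..m+1}"
    then show "infsum (b j) {1..} = dirichlet_L s (restr_power (\<gamma> (j - 1)) (f j))"
      by (intro infsumI b) simp
  qed simp
  ultimately show ?thesis
    by (metis dirichlet_L_eqI)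
qed

end
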